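(* Let $G$ be a connected graph on $n$ vertices with independence number $\beta$. Then $$ABC(G)\leq \beta(n-\beta)\sqrt{\frac{2n-\beta-3}{(n-\beta)(n-1)}}+\frac{(n-\beta)(n-\beta-1)}{2}\sqrt{\frac{2n-4}{(n-1)(n-1)}},$$ with equality if and only if $G\cong \overline{K_{\beta}}\vee K_{n-\beta}$.
   Context: For a simple graph $G$, $ABC(G)=\sum_{uv\in E(G)}\sqrt{\frac{d(u)+d(v)-2}{d(u)d(v)}}$, where $d(u)$ is the degree of $u$. The independence number is the size of a largest set of pairwise nonadjacent vertices. $\overline{K_\beta}$ is the edgeless graph on $\beta$ vertices, $K_r$ the complete graph on $r$ vertices, and $G\vee H$ (join) is the graph on $V(G)\cup V(H)$ (disjoint) with edge set $E(G)\cup E(H)\cup\{xy: x\in V(G), y\in V(H)\}$. *)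

theory Defs
  imports Complex_Main
begin

definition simple_graph :: "'a set \<Rightarrow> 'a set set \<Rightarrow> bool" where
  "simple_graph V E \<longleftrightarrow> finite V \<and>
     (\<forall>e\<in>E. \<exists>u v. u \<noteq> v \<and> u \<in> V \<and> v \<in> V \<and> e = {u, v})"

definition adj :: "'a set set \<Rightarrow> 'a \<Rightarrow> 'a \<Rightarrow> bool" where
  "adj E u v \<longleftrightarrow> {u, v} \<in> E"

definition degree :: "'a set set \<Rightarrow> 'a \<Rightarrow> nat" where
  "degree E v = card {e \<in> E. v \<in> e}"

definition connected_graph :: "'a set \<Rightarrow> 'a set set \<Rightarrow> bool" where
  "connected_graph V E \<longleftrightarrow> V \<noteq> {} \<and> (\<forall>u\<in>V. \<forall>v\<in>V. (adj E)\<^sup>*\<^sup>* u v)"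

text \<open>Atom-bond connectivity index; for an edge e = {u,v}, the sum over e of degrees is
  d(u)+d(v) and the product is d(u)d(v).\<close>
definition ABC :: "'a set set \<Rightarrow> real" where
  "ABC E = (\<Sum>e\<in>E. sqrt (((\<Sum>v\<in>e. real (degree E v)) - 2) / (\<Prod>v\<in>e. real (degree E v))))"

definition independent_set :: "'a set \<Rightarrow> 'a set set \<Rightarrow> 'a set \<Rightarrow> bool" where
  "independent_set V E S \<longleftrightarrow> S \<subseteq> V \<and> (\<forall>u\<in>S. \<forall>v\<in>S. \<not> adj E u v)"

definition independence_number :: "'a set \<Rightarrow> 'a set set \<Rightarrow> nat" where
  "independence_number V E = Max (card ` {S. independent_set V E S})"

definition graph_iso :: "'a set \<Rightarrow> 'a set set \<Rightarrow> 'b set \<Rightarrow> 'b set set \<Rightarrow> bool" where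
  "graph_iso V E V' E' \<longleftrightarrow> (\<exists>f. bij_betw f V V' \<and>
     (\<forall>u\<in>V. \<forall>v\<in>V. {u, v} \<in> E \<longleftrightarrow> {f u, f v} \<in> E'))"

definition empty_graph_V :: "nat \<Rightarrow> nat set" where "empty_graph_V b = {0..<b}"
definition empty_graph_E :: "nat \<Rightarrow> nat set set" where "empty_graph_E b = {}"
definition complete_graph_V :: "nat \<Rightarrow> nat set" where "complete_graph_V r = {0..<r}"
definition complete_graph_E :: "nat \<Rightarrow> nat set set" where
  "complete_graph_E r = {{u, v} | u v. u < r \<and> v < r \<and> u \<noteq> v}"

definition join_V :: "'a set \<Rightarrow> 'b set \<Rightarrow> ('a + 'b) set" where
  "join_V V1 V2 = Inl ` V1 \<union> Inr ` V2"
definition join_E :: "'a set \<Rightarrow> 'a set set \<Rightarrow> 'b set \<Rightarrow> 'b set set \<Rightarrow> ('a + 'b) set set" where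
  "join_E V1 E1 V2 E2 = (image Inl) ` E1 \<union> (image Inr) ` E2 \<union>
     {{Inl x, Inr y} | x y. x \<in> V1 \<and> y \<in> V2}"

end

theory Submission
  imports Defs
begin

text \<open>
  Let \<open>S\<close> be a maximum independent set, \<open>|S| = \<beta>\<close>. Every edge of \<open>G\<close> has an endpoint outside
  \<open>S\<close>, so \<open>G\<close> is a spanning subgraph of the complete split graph \<open>K\<close> on \<open>V\<close> whose only
  non-edges lie inside \<open>S\<close>; \<open>K\<close> is isomorphic to \<open>\<overline>K\<^sub>\<beta> \<or> K\<^sub>n\<^sub>-\<^sub>\<beta>\<close> and its ABC index is
  the bound. It therefore suffices that adding an edge \<open>uv\<close> between two non-isolated
  vertices strictly increases ABC. With \<open>a = d(u)\<close>, raising \<open>d(u)\<close> by one lowers the weight of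
  each of the \<open>a\<close> old edges at \<open>u\<close> by at most \<open>1/\<surd>a - 1/\<surd>(a+1)\<close>, these losses add up to
  less than \<open>1/(2\<surd>(a+1))\<close>, and the new edge weighs at least \<open>1/(2\<surd>(a+1)) + 1/(2\<surd>(b+1))\<close>.
  In a connected graph with at least two vertices no vertex is isolated, so \<open>ABC(G) < ABC(K)\<close>
  unless \<open>G = K\<close>; an isomorphism with \<open>K\<close> forces equally many edges, hence \<open>G = K\<close>.
\<close>

definition abc_weight :: "real \<Rightarrow> real \<Rightarrow> real" where
  "abc_weight x y = sqrt ((x + y - 2) / (x * y))"

text \<open>By \<open>abc_weight_eq\<close> below, \<open>abc_weight a y\<close> is of this form as a function of \<open>1 / sqrt a\<close>.\<close>
lemma sqrt_add_mult_square_diff_le: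
  fixes c s P Q :: real
  assumes "c \<ge> 0" "s \<le> 1" "0 \<le> Q" "Q \<le> P"
  shows "sqrt (c + s * P\<^sup>2) - sqrt (c + s * Q\<^sup>2) \<le> P - Q"
proof (cases "s \<le> 0")
  case True
  have "Q\<^sup>2 \<le> P\<^sup>2" using assms by (simp add: power_mono)
  then have "c + s * P\<^sup>2 \<le> c + s * Q\<^sup>2" using True by (simp add: mult_left_mono_neg)
  then have "sqrt (c + s * P\<^sup>2) \<le> sqrt (c + s * Q\<^sup>2)" by (rule real_sqrt_le_mono)
  then show ?thesis using assms by linarith
next
  case False
  define X where "X = sqrt (c + s * P\<^sup>2)"
  define Y where "Y = sqrt (c + s * Q\<^sup>2)"
  have "(s * t)\<^sup>2 \<le> c + s * t\<^sup>2" for t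
  proof -
    have "(s * t)\<^sup>2 = s * (s * t\<^sup>2)" by (simp add: power2_eq_square)
    also have "\<dots> \<le> s * t\<^sup>2" using False assms by (intro mult_left_le_one_le) auto
    finally show ?thesis using assms by linarith
  qed
  then have "s * P \<le> X" "s * Q \<le> Y"
    unfolding X_def Y_def by (auto intro: real_le_rsqrt)
  then have sum_le: "s * (P + Q) \<le> X + Y" by (simp add: algebra_simps)
  have "X\<^sup>2 = c + s * P\<^sup>2" "Y\<^sup>2 = c + s * Q\<^sup>2"
    using False assms by (simp_all add: X_def Y_def)
  then have "(X - Y) * (X + Y) = (P - Q) * (s * (P + Q))"
    by (simp add: power2_eq_square algebra_simps)
  also have "\<dots> \<le> (P - Q) * (X + Y)"
    using sum_le assms by (simp add: mult_left_mono)
  finally have prod_le: "(X - Y) * (X + Y) \<le> (P - Q) * (X + Y)" .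
  have "X \<ge> 0" "Y \<ge> 0" using False assms by (simp_all add: X_def Y_def)
  have "X - Y \<le> P - Q"
  proof (cases "X + Y = 0")
    case False
    with \<open>X \<ge> 0\<close> \<open>Y \<ge> 0\<close> have "X + Y > 0" by linarith
    with prod_le show ?thesis by (simp add: mult_le_cancel_right)
  qed (use assms \<open>X \<ge> 0\<close> \<open>Y \<ge> 0\<close> in linarith)
  then show ?thesis unfolding X_def Y_def .
qed

lemma abc_weight_eq:
  fixes x y :: real
  assumes "x > 0" "y > 0"
  shows "abc_weight x y = sqrt (1 / y + (1 - 2 / y) * (1 / sqrt x)\<^sup>2)"
proof -
  have "(x + y - 2) / (x * y) = 1 / y + (1 - 2 / y) * (1 / x)"
    using assms by (simp add: field_simps)
  then show ?thesis using assms by (simp add: abc_weight_def power_divide)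
qed

definition inv_sqrt_drop :: "real \<Rightarrow> real" where
  "inv_sqrt_drop a = 1 / sqrt a - 1 / sqrt (a + 1)"

lemma abc_weight_diff_le:
  fixes a y :: real
  assumes "a > 0" "y > 0"
  shows "abc_weight a y - abc_weight (a + 1) y \<le> inv_sqrt_drop a"
proof -
  have "1 / sqrt (a + 1) \<le> 1 / sqrt a" using assms by (simp add: divide_simps)
  then show ?thesis
    using sqrt_add_mult_square_diff_le[of "1 / y" "1 - 2 / y" "1 / sqrt (a + 1)" "1 / sqrt a"] assms
    by (simp add: abc_weight_eq inv_sqrt_drop_def)
qed

lemma mult_inv_sqrt_drop_less:
  fixes a :: real
  assumes "a > 0"
  shows "a * inv_sqrt_drop a < 1 / (2 * sqrt (a + 1))"
proof -
  define P where "P = sqrt a"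
  define Q where "Q = sqrt (a + 1)"
  have P: "P > 0" "P\<^sup>2 = a" and Q: "Q > 0" "Q\<^sup>2 = a + 1" and "P < Q"
    using assms by (auto simp: P_def Q_def)
  have "2 * P * (Q - P) < (Q + P) * (Q - P)"
    using \<open>P < Q\<close> P by (intro mult_strict_right_mono) auto
  also have "\<dots> = 1" using P Q by (simp add: algebra_simps power2_eq_square)
  finally have "P * Q - P\<^sup>2 < 1 / 2" by (simp add: algebra_simps power2_eq_square)
  then have "(P * Q - P\<^sup>2) / Q < (1 / 2) / Q"
    using Q by (intro divide_strict_right_mono) auto
  moreover have "a * (1 / P - 1 / Q) = (P * Q - P\<^sup>2) / Q"
    using P Q by (simp add: field_simps power2_eq_square)
  ultimately show ?thesis by (simp add: P_def Q_def inv_sqrt_drop_def)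
qed

lemma half_inverse_sqrt_sum_le_abc_weight:
  fixes a b :: real
  assumes "a \<ge> 1" "b \<ge> 1"
  shows "1 / (2 * sqrt (a + 1)) + 1 / (2 * sqrt (b + 1)) \<le> abc_weight (a + 1) (b + 1)"
proof -
  define P where "P = sqrt (a + 1)"
  define Q where "Q = sqrt (b + 1)"
  have P: "P > 0" "P\<^sup>2 = a + 1" and Q: "Q > 0" "Q\<^sup>2 = b + 1"
    using assms by (auto simp: P_def Q_def)
  have "1 / (2 * P) + 1 / (2 * Q) = (P + Q) / (2 * P * Q)"
    using P Q by (simp add: field_simps)
  then have "(1 / (2 * P) + 1 / (2 * Q))\<^sup>2 = (P + Q)\<^sup>2 / (4 * (P\<^sup>2 * Q\<^sup>2))"
    by (simp add: power_divide power_mult_distrib)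
  also have "\<dots> \<le> 4 * (P\<^sup>2 + Q\<^sup>2 - 2) / (4 * (P\<^sup>2 * Q\<^sup>2))"
    using P Q assms sum_squares_ge_zero[of "P - Q" 0]
    by (intro divide_right_mono) (auto simp: power2_eq_square algebra_simps)
  also have "\<dots> = (a + 1 + (b + 1) - 2) / ((a + 1) * (b + 1))"
    using P Q assms by (simp add: divide_simps)
  finally show ?thesis
    using P Q unfolding abc_weight_def P_def[symmetric] Q_def[symmetric] by (intro real_le_rsqrt) auto
qed

lemma simple_graph_edgeE:
  assumes "simple_graph V E" "e \<in> E"
  obtains u v where "u \<noteq> v" "u \<in> V" "v \<in> V" "e = {u, v}"
  using assms unfolding simple_graph_def by blast

lemma simple_graph_subset: "simple_graph V F \<Longrightarrow> E \<subseteq> F \<Longrightarrow> simple_graph V E"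
  unfolding simple_graph_def by blast

lemma Union_edges_subset_simple_graph: "simple_graph V E \<Longrightarrow> \<Union>E \<subseteq> V"
  by (auto elim: simple_graph_edgeE)

lemma finite_edges_simple_graph:
  assumes "simple_graph V E"
  shows "finite E"
proof -
  have "E \<subseteq> Pow V" using Union_edges_subset_simple_graph[OF assms] by blast
  moreover have "finite V" using assms unfolding simple_graph_def by simp
  ultimately show ?thesis by (rule finite_subset[OF _ finite_Pow_iff[THEN iffD2]])
qed

lemma degree_pos_if_mem_edge:
  assumes "simple_graph V E" "e \<in> E" "x \<in> e"
  shows "0 < degree E x"
  using assms finite_edges_simple_graph[OF assms(1)]
  unfolding degree_def by (auto simp: card_gt_0_iff)

lemma degree_insert:
  assumes "finite E" "e \<notin> E"
  shows "degree (insert e E) x = degree E x + (if x \<in> e then 1 else 0)"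
proof -
  have "{f \<in> insert e E. x \<in> f} = (if x \<in> e then insert e {f \<in> E. x \<in> f} else {f \<in> E. x \<in> f})"
    by auto
  then show ?thesis using assms unfolding degree_def by simp
qed

lemma degree_mono: "finite F \<Longrightarrow> E \<subseteq> F \<Longrightarrow> degree E x \<le> degree F x"
  unfolding degree_def by (rule card_mono) auto

lemma connected_graph_degree_pos:
  assumes "simple_graph V E" "connected_graph V E" "x \<in> V" "y \<in> V" "x \<noteq> y"
  shows "0 < degree E x"
proof -
  have "(adj E)\<^sup>*\<^sup>* x y" using assms unfolding connected_graph_def by blast
  then obtain z where "{x, z} \<in> E"
    using \<open>x \<noteq> y\<close> by (cases rule: converse_rtranclpE) (auto simp: adj_def)
  then show ?thesis using degree_pos_if_mem_edge[OF assms(1)] by blast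
qed

definition edge_weight :: "('a \<Rightarrow> nat) \<Rightarrow> 'a set \<Rightarrow> real" where
  "edge_weight d e = sqrt (((\<Sum>v\<in>e. real (d v)) - 2) / (\<Prod>v\<in>e. real (d v)))"

lemma ABC_eq_sum_edge_weight: "ABC E = (\<Sum>e\<in>E. edge_weight (degree E) e)"
  unfolding ABC_def edge_weight_def by simp

lemma edge_weight_doubleton: "x \<noteq> y \<Longrightarrow> edge_weight d {x, y} = abc_weight (real (d x)) (real (d y))"
  unfolding edge_weight_def abc_weight_def by simp

lemma sum_indicator_edges_eq_degree:
  "finite E \<Longrightarrow> (\<Sum>f\<in>E. if x \<in> f then c else 0) = real (degree E x) * c"
  unfolding degree_def by (simp add: sum.If_cases Int_def conj_commute)

lemma edge_weight_insert_edge_drop_le: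
  assumes "simple_graph V E" "{u, v} \<notin> E" "f \<in> E" "u \<in> f"
  shows "edge_weight (degree E) f - edge_weight (degree (insert {u, v} E)) f
           \<le> inv_sqrt_drop (real (degree E u))"
proof -
  obtain x where f: "f = {u, x}" "x \<noteq> u"
    using assms(1,3,4) by (elim simple_graph_edgeE) auto
  have "x \<noteq> v" using f assms(2,3) by auto
  have fin: "finite E" using finite_edges_simple_graph[OF assms(1)] .
  have "degree (insert {u, v} E) u = degree E u + 1" "degree (insert {u, v} E) x = degree E x"
    using degree_insert[OF fin assms(2)] f \<open>x \<noteq> v\<close> by simp_all
  moreover have "0 < degree E u" "0 < degree E x"
    using degree_pos_if_mem_edge[OF assms(1,3)] f by auto
  ultimately show ?thesis
    using abc_weight_diff_le[of "real (degree E u)" "real (degree E x)"]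
    by (simp add: f edge_weight_doubleton[OF f(2)[symmetric]] add.commute)
qed

lemma edge_weight_le_insert_edge:
  assumes "simple_graph V E" "u \<noteq> v" "{u, v} \<notin> E" "f \<in> E"
  shows "edge_weight (degree E) f \<le> edge_weight (degree (insert {u, v} E)) f
           + (if u \<in> f then inv_sqrt_drop (real (degree E u)) else 0)
           + (if v \<in> f then inv_sqrt_drop (real (degree E v)) else 0)"
proof -
  have "\<not> (u \<in> f \<and> v \<in> f)"
    using assms by (elim simple_graph_edgeE) (auto simp: doubleton_eq_iff insert_commute)
  moreover have "edge_weight (degree (insert {u, v} E)) f = edge_weight (degree E) f"
    if "u \<notin> f" "v \<notin> f"
  proof -
    have "degree (insert {u, v} E) w = degree E w" if "w \<in> f" for w
      using degree_insert[OF finite_edges_simple_graph[OF assms(1)] assms(3)] that \<open>u \<notin> f\<close> \<open>v \<notin> f\<close>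
      by auto
    then show ?thesis unfolding edge_weight_def by (simp cong: sum.cong prod.cong)
  qed
  moreover have "{v, u} \<notin> E" using assms(3) by (simp add: insert_commute)
  ultimately show ?thesis
    using edge_weight_insert_edge_drop_le[OF assms(1,3,4)]
          edge_weight_insert_edge_drop_le[OF assms(1) \<open>{v, u} \<notin> E\<close> assms(4)]
    by (auto simp: insert_commute)
qed

lemma ABC_insert_edge_less:
  assumes "simple_graph V E" "u \<noteq> v" "{u, v} \<notin> E" "0 < degree E u" "0 < degree E v"
  shows "ABC E < ABC (insert {u, v} E)"
proof -
  let ?d = "degree E" and ?d' = "degree (insert {u, v} E)"
  define a where "a = real (?d u)"
  define b where "b = real (?d v)"
  have fin: "finite E" using finite_edges_simple_graph[OF assms(1)] .
  have "a \<ge> 1" "b \<ge> 1" using assms(4,5) by (simp_all add: a_def b_def)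
  have "ABC E \<le> (\<Sum>f\<in>E. edge_weight ?d' f
      + (if u \<in> f then inv_sqrt_drop a else 0) + (if v \<in> f then inv_sqrt_drop b else 0))"
    unfolding ABC_eq_sum_edge_weight a_def b_def
    using edge_weight_le_insert_edge[OF assms(1-3)] by (rule sum_mono)
  also have "\<dots> = (\<Sum>f\<in>E. edge_weight ?d' f) + a * inv_sqrt_drop a + b * inv_sqrt_drop b"
    using fin by (simp add: sum.distrib sum_indicator_edges_eq_degree a_def b_def)
  also have "\<dots> < (\<Sum>f\<in>E. edge_weight ?d' f) + abc_weight (a + 1) (b + 1)"
    using mult_inv_sqrt_drop_less[of a] mult_inv_sqrt_drop_less[of b]
          half_inverse_sqrt_sum_le_abc_weight[of a b] \<open>a \<ge> 1\<close> \<open>b \<ge> 1\<close>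
    by linarith
  also have "\<dots> = ABC (insert {u, v} E)"
    using fin assms(2,3) degree_insert[OF fin assms(3)]
    by (simp add: ABC_eq_sum_edge_weight edge_weight_doubleton a_def b_def add.commute)
  finally show ?thesis .
qed

lemma ABC_less_of_psubset:
  assumes "simple_graph V F" "E \<subset> F" "\<forall>x\<in>V. 0 < degree E x"
  shows "ABC E < ABC F"
proof -
  have finF: "finite F" using finite_edges_simple_graph[OF assms(1)] .
  have "ABC E < ABC (E \<union> D)" if "finite D" "D \<noteq> {}" "D \<subseteq> F - E" for D
    using that
  proof (induction D rule: finite_ne_induct)
    case (singleton e)
    then obtain u v where "u \<noteq> v" "u \<in> V" "v \<in> V" "e = {u, v}"
      using assms(1) by (blast elim: simple_graph_edgeE)
    moreover have "simple_graph V E" using assms(1,2) by (blast intro: simple_graph_subset)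
    ultimately show ?case
      using singleton assms(3) by (simp add: ABC_insert_edge_less)
  next
    case (insert e D)
    then obtain u v where uv: "u \<noteq> v" "u \<in> V" "v \<in> V" and e: "e = {u, v}"
      using assms(1) by (blast elim: simple_graph_edgeE)
    have sg: "simple_graph V (E \<union> D)"
      using insert.prems assms(2) by (intro simple_graph_subset[OF assms(1)]) auto
    have pos: "0 < degree (E \<union> D) x" if "x \<in> V" for x
      using degree_mono[OF finite_edges_simple_graph[OF sg], of E x] assms(3) that by fastforce
    have "e \<notin> E \<union> D" using insert.hyps insert.prems by auto
    with ABC_insert_edge_less[OF sg uv(1) _ pos pos] uv
    have "ABC (E \<union> D) < ABC (insert e (E \<union> D))" unfolding e by blast
    then show ?case using insert.IH insert.prems by simp
  qed
  from this[of "F - E"] have "ABC E < ABC (E \<union> (F - E))" using finF assms(2) by blast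
  moreover have "E \<union> (F - E) = F" using assms(2) by blast
  ultimately show ?thesis by simp
qed

definition complete_split_graph :: "'a set \<Rightarrow> 'a set \<Rightarrow> 'a set set" where
  "complete_split_graph V S = {{x, y} | x y. x \<in> V \<and> y \<in> V \<and> x \<noteq> y \<and> \<not> (x \<in> S \<and> y \<in> S)}"

lemma doubleton_in_complete_split_graph_iff:
  "u \<in> V \<Longrightarrow> v \<in> V \<Longrightarrow> {u, v} \<in> complete_split_graph V S \<longleftrightarrow> u \<noteq> v \<and> \<not> (u \<in> S \<and> v \<in> S)"
  unfolding complete_split_graph_def by (auto simp: doubleton_eq_iff)

lemma simple_graph_complete_split_graph: "finite V \<Longrightarrow> simple_graph V (complete_split_graph V S)"
  unfolding simple_graph_def complete_split_graph_def by blast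

lemma subset_complete_split_graph:
  assumes "simple_graph V E" "independent_set V E S"
  shows "E \<subseteq> complete_split_graph V S"
proof
  fix e assume "e \<in> E"
  with assms show "e \<in> complete_split_graph V S"
    unfolding independent_set_def adj_def complete_split_graph_def
    by (elim simple_graph_edgeE) blast+
qed

lemma complete_split_graph_eq_Un:
  assumes "S \<subseteq> V"
  shows "complete_split_graph V S
           = (\<lambda>(x, y). {x, y}) ` (S \<times> (V - S)) \<union> {e. e \<subseteq> V - S \<and> card e = 2}"
  using assms unfolding complete_split_graph_def by (auto simp: card_2_iff insert_commute)

lemma degree_complete_split_graph:
  assumes "S \<subseteq> V" "x \<in> V"
  shows "degree (complete_split_graph V S) x = (if x \<in> S then card (V - S) else card V - 1)"
proof -
  let ?N = "if x \<in> S then V - S else V - {x}"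
  have "{e \<in> complete_split_graph V S. x \<in> e} = (\<lambda>y. {x, y}) ` ?N"
    using assms unfolding complete_split_graph_def by (auto simp: doubleton_eq_iff)
  moreover have "inj_on (\<lambda>y. {x, y}) ?N" by (auto simp: inj_on_def doubleton_eq_iff)
  ultimately show ?thesis
    using assms unfolding degree_def by (auto simp: card_image card_Diff_singleton_if)
qed

lemma real_degree_complete_split_graph:
  assumes "finite V" "S \<subseteq> V" "x \<in> V"
  shows "real (degree (complete_split_graph V S) x)
           = (if x \<in> S then real (card (V - S)) else real (card V) - 1)"
proof -
  have "card V \<ge> 1" using assms(1,3) by (auto simp: Suc_le_eq card_gt_0_iff)
  then show ?thesis using assms(2,3) by (simp add: degree_complete_split_graph of_nat_diff)
qed

lemma real_choose_two: "real (k choose 2) = real k * (real k - 1) / 2"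
  by (induction k) (auto simp: numeral_2_eq_2 field_simps)

lemma ABC_complete_split_graph:
  assumes "finite V" "S \<subseteq> V"
  defines "k \<equiv> card (V - S)"
  shows "ABC (complete_split_graph V S)
           = real (card S) * real k * abc_weight (real k) (real (card V) - 1)
             + real k * (real k - 1) / 2 * abc_weight (real (card V) - 1) (real (card V) - 1)"
proof -
  let ?T = "V - S" and ?d = "degree (complete_split_graph V S)"
  define A where "A = (\<lambda>(x, y). {x, y}) ` (S \<times> ?T)"
  define B where "B = {e. e \<subseteq> ?T \<and> card e = 2}"
  have dS: "real (?d x) = real k" if "x \<in> S" for x
    using real_degree_complete_split_graph[OF assms(1,2) subsetD[OF assms(2) that]] that
    by (simp add: k_def)
  have dT: "real (?d x) = real (card V) - 1" if "x \<in> ?T" for x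
    using that real_degree_complete_split_graph[OF assms(1,2)] by auto
  have "(\<Sum>e\<in>A. edge_weight ?d e) = (\<Sum>(x, y)\<in>S \<times> ?T. edge_weight ?d {x, y})"
    unfolding A_def by (subst sum.reindex) (auto simp: inj_on_def doubleton_eq_iff case_prod_unfold)
  also have "\<dots> = (\<Sum>_\<in>S \<times> ?T. abc_weight (real k) (real (card V) - 1))"
  proof (rule sum.cong[OF refl])
    fix p assume "p \<in> S \<times> ?T"
    then obtain x y where "p = (x, y)" "x \<in> S" "y \<in> ?T" by blast
    moreover from this have "x \<noteq> y" by blast
    ultimately show "(case p of (x, y) \<Rightarrow> edge_weight ?d {x, y}) = abc_weight (real k) (real (card V) - 1)"
      by (simp add: edge_weight_doubleton dS dT)
  qed
  finally have sumA: "(\<Sum>e\<in>A. edge_weight ?d e) = real (card S) * real k * abc_weight (real k) (real (card V) - 1)"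
    by (simp add: card_cartesian_product k_def)
  have "(\<Sum>e\<in>B. edge_weight ?d e) = (\<Sum>_\<in>B. abc_weight (real (card V) - 1) (real (card V) - 1))"
    by (intro sum.cong) (auto simp: B_def card_2_iff edge_weight_doubleton dT)
  also have "\<dots> = real k * (real k - 1) / 2 * abc_weight (real (card V) - 1) (real (card V) - 1)"
    using n_subsets[of ?T 2] assms(1) by (simp add: B_def k_def real_choose_two)
  finally have sumB: "(\<Sum>e\<in>B. edge_weight ?d e) = \<dots>" .
  have split_eq: "complete_split_graph V S = A \<union> B"
    unfolding A_def B_def by (rule complete_split_graph_eq_Un[OF assms(2)])
  have "ABC (complete_split_graph V S) = (\<Sum>e\<in>A \<union> B. edge_weight ?d e)"
    unfolding ABC_eq_sum_edge_weight by (simp only: split_eq[symmetric])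
  also have "\<dots> = (\<Sum>e\<in>A. edge_weight ?d e) + (\<Sum>e\<in>B. edge_weight ?d e)"
    using assms(1) finite_subset[OF assms(2,1)] unfolding A_def B_def
    by (intro sum.union_disjoint) auto
  finally show ?thesis unfolding sumA sumB .
qed

lemma graph_iso_complete_split_graph:
  assumes "bij_betw f V W" "S \<subseteq> V"
  shows "graph_iso V (complete_split_graph V S) W (complete_split_graph W (f ` S))"
  unfolding graph_iso_def
proof (intro exI conjI ballI)
  fix u v assume "u \<in> V" "v \<in> V"
  moreover have "f u \<in> W" "f v \<in> W" using assms(1) \<open>u \<in> V\<close> \<open>v \<in> V\<close> by (auto dest: bij_betwE)
  moreover have "inj_on f V" using assms(1) by (rule bij_betw_imp_inj_on)
  ultimately show "{u, v} \<in> complete_split_graph V S \<longleftrightarrow> {f u, f v} \<in> complete_split_graph W (f ` S)"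
    using assms(2) by (simp add: doubleton_in_complete_split_graph_iff inj_on_eq_iff inj_on_image_mem_iff)
qed (rule assms(1))

lemma join_E_eq_complete_split_graph:
  "join_E (empty_graph_V b) (empty_graph_E b) (complete_graph_V k) (complete_graph_E k)
     = complete_split_graph (join_V (empty_graph_V b) (complete_graph_V k)) (Inl ` {0..<b})"
proof -
  have Inr_edges: "image (Inr :: nat \<Rightarrow> nat + nat) ` complete_graph_E k
                    = {{Inr u, Inr v} | u v. u < k \<and> v < k \<and> u \<noteq> v}"
  proof (intro equalityI subsetI)
    fix e assume "e \<in> {{Inr u, Inr v} | u v. u < k \<and> v < k \<and> u \<noteq> v}"
    then obtain u v where "e = Inr ` {u, v}" "u < k" "v < k" "u \<noteq> v" by auto
    then show "e \<in> image Inr ` complete_graph_E k" unfolding complete_graph_E_def by blast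
  qed (auto simp: complete_graph_E_def)
  show ?thesis
    unfolding Inr_edges join_E_def join_V_def empty_graph_V_def empty_graph_E_def complete_graph_V_def
      complete_split_graph_def
    by (auto simp: insert_commute) fastforce+
qed

lemma ex_bij_betw_join_V:
  assumes "finite V" "S \<subseteq> V"
  obtains f where "bij_betw f V (join_V (empty_graph_V (card S)) (complete_graph_V (card (V - S))))"
    and "f ` S = Inl ` {0..<card S}"
proof -
  obtain g where g: "bij_betw g S {0..<card S}"
    using ex_bij_betw_finite_nat finite_subset[OF assms(2,1)] by blast
  obtain h where h: "bij_betw h (V - S) {0..<card (V - S)}"
    using ex_bij_betw_finite_nat assms(1) by blast
  define f where "f x = (if x \<in> S then Inl (g x) else Inr (h x))" for x
  have "bij_betw (Inl \<circ> g) S (Inl ` {0..<card S})"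
    by (rule bij_betw_trans[OF g]) (simp add: bij_betw_imageI)
  then have "bij_betw f S (Inl ` {0..<card S})"
    by (subst bij_betw_cong[of S f "Inl \<circ> g"]) (auto simp: f_def)
  moreover have "bij_betw (Inr \<circ> h) (V - S) (Inr ` {0..<card (V - S)})"
    by (rule bij_betw_trans[OF h]) (simp add: bij_betw_imageI)
  then have "bij_betw f (V - S) (Inr ` {0..<card (V - S)})"
    by (subst bij_betw_cong[of "V - S" f "Inr \<circ> h"]) (auto simp: f_def)
  ultimately have "bij_betw f (S \<union> (V - S)) (Inl ` {0..<card S} \<union> Inr ` {0..<card (V - S)})"
    by (rule bij_betw_combine) auto
  moreover have "S \<union> (V - S) = V" using assms(2) by blast
  ultimately show ?thesis
    using that bij_betw_imp_surj_on[OF \<open>bij_betw f S _\<close>]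
    unfolding join_V_def empty_graph_V_def complete_graph_V_def by auto
qed

lemma card_edges_eq_if_graph_iso:
  assumes "graph_iso V E W F" "simple_graph V E" "simple_graph W F"
  shows "card E = card F"
proof -
  obtain f where f: "bij_betw f V W" and edges: "\<forall>u\<in>V. \<forall>v\<in>V. {u, v} \<in> E \<longleftrightarrow> {f u, f v} \<in> F"
    using assms(1) unfolding graph_iso_def by blast
  have "inj_on (image f) E"
    using bij_betw_imp_inj_on[OF f] Union_edges_subset_simple_graph[OF assms(2)]
    by (intro inj_on_image) (rule inj_on_subset)
  moreover have "image f ` E = F"
  proof (intro equalityI subsetI)
    fix e assume "e \<in> image f ` E"
    with assms(2) edges show "e \<in> F" by (auto elim: simple_graph_edgeE)
  next
    fix e assume "e \<in> F"
    with assms(3) obtain x y where "x \<in> W" "y \<in> W" "e = {x, y}" by (auto elim: simple_graph_edgeE)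
    moreover from this f obtain u v where "u \<in> V" "v \<in> V" "x = f u" "y = f v"
      by (auto simp: bij_betw_def)
    ultimately have "{u, v} \<in> E" "e = f ` {u, v}" using edges \<open>e \<in> F\<close> by auto
    then show "e \<in> image f ` E" by blast
  qed
  ultimately show ?thesis by (metis card_image)
qed

lemma ex_independent_set_card_independence_number:
  assumes "finite V"
  obtains S where "independent_set V E S" "card S = independence_number V E"
proof -
  have "finite {S. independent_set V E S}"
    using assms unfolding independent_set_def by (auto intro: finite_subset[of _ "Pow V"])
  moreover have "{} \<in> {S. independent_set V E S}" unfolding independent_set_def by simp
  ultimately have "independence_number V E \<in> card ` {S. independent_set V E S}"
    unfolding independence_number_def by (intro Max_in) auto
  with that show ?thesis by force
qed

lemma graph_iso_join_iff_eq_complete_split_graph: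
  assumes "finite V" "S \<subseteq> V" "simple_graph V E" "E \<subseteq> complete_split_graph V S"
  defines "b \<equiv> card S" and "k \<equiv> card (V - S)"
  shows "graph_iso V E (join_V (empty_graph_V b) (complete_graph_V k))
           (join_E (empty_graph_V b) (empty_graph_E b) (complete_graph_V k) (complete_graph_E k))
         \<longleftrightarrow> E = complete_split_graph V S"
proof -
  let ?K = "complete_split_graph V S" and ?J = "join_V (empty_graph_V b) (complete_graph_V k)"
  have K_simple: "simple_graph V ?K" by (rule simple_graph_complete_split_graph[OF assms(1)])
  have J_simple: "simple_graph ?J (complete_split_graph ?J (Inl ` {0..<b}))"
    by (rule simple_graph_complete_split_graph) (simp add: join_V_def empty_graph_V_def complete_graph_V_def)
  obtain f where "bij_betw f V ?J" "f ` S = Inl ` {0..<b}"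
    using ex_bij_betw_join_V[OF assms(1,2)] unfolding b_def k_def .
  then have K_iso: "graph_iso V ?K ?J (complete_split_graph ?J (Inl ` {0..<b}))"
    using graph_iso_complete_split_graph[OF _ assms(2)] by metis
  show ?thesis
    unfolding join_E_eq_complete_split_graph
  proof
    assume "graph_iso V E ?J (complete_split_graph ?J (Inl ` {0..<b}))"
    then have "card E = card ?K"
      using card_edges_eq_if_graph_iso[OF _ assms(3) J_simple] card_edges_eq_if_graph_iso[OF K_iso K_simple J_simple]
      by simp
    then show "E = ?K"
      using card_subset_eq[OF finite_edges_simple_graph[OF K_simple] assms(4)] by simp
  qed (use K_iso in simp)
qed

theorem theorem2p2:
  fixes V :: "'a set" and E :: "'a set set"
  assumes "simple_graph V E" and "connected_graph V E"
  defines "n \<equiv> card V" and "\<beta> \<equiv> independence_number V E"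
  shows "ABC E \<le> real \<beta> * (real n - real \<beta>) *
            sqrt ((2 * real n - real \<beta> - 3) / ((real n - real \<beta>) * (real n - 1)))
          + (real n - real \<beta>) * (real n - real \<beta> - 1) / 2 *
            sqrt ((2 * real n - 4) / ((real n - 1) * (real n - 1)))
       \<and> (ABC E = real \<beta> * (real n - real \<beta>) *
            sqrt ((2 * real n - real \<beta> - 3) / ((real n - real \<beta>) * (real n - 1)))
          + (real n - real \<beta>) * (real n - real \<beta> - 1) / 2 *
            sqrt ((2 * real n - 4) / ((real n - 1) * (real n - 1)))
         \<longleftrightarrow> graph_iso V E
               (join_V (empty_graph_V \<beta>) (complete_graph_V (n - \<beta>)))
               (join_E (empty_graph_V \<beta>) (empty_graph_E \<beta>)
                       (complete_graph_V (n - \<beta>)) (complete_graph_E (n - \<beta>))))"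
    (is "ABC E \<le> ?R \<and> (ABC E = ?R \<longleftrightarrow> ?iso)")
proof -
  have "finite V" using assms(1) unfolding simple_graph_def by simp
  obtain S where S: "independent_set V E S" "card S = \<beta>"
    using ex_independent_set_card_independence_number[OF \<open>finite V\<close>] unfolding \<beta>_def by blast
  have "S \<subseteq> V" using S(1) unfolding independent_set_def by blast
  have card_diff: "card (V - S) = n - \<beta>" "\<beta> \<le> n"
    using card_Diff_subset[OF finite_subset] card_mono \<open>S \<subseteq> V\<close> \<open>finite V\<close> S(2)
    by (auto simp: n_def)
  let ?K = "complete_split_graph V S"
  have K_simple: "simple_graph V ?K" by (rule simple_graph_complete_split_graph[OF \<open>finite V\<close>])
  have E_sub_K: "E \<subseteq> ?K" by (rule subset_complete_split_graph[OF assms(1) S(1)])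
  have "real (card (V - S)) = real n - real \<beta>" using card_diff by simp
  moreover have "(real n - real \<beta>) + (real n - 1) - 2 = 2 * real n - real \<beta> - 3"
    "(real n - 1) + (real n - 1) - 2 = 2 * real n - 4" by simp_all
  ultimately have ABC_K: "ABC ?K = ?R"
    using ABC_complete_split_graph[OF \<open>finite V\<close> \<open>S \<subseteq> V\<close>]
    by (simp only: S(2) n_def[symmetric] abc_weight_def)
  have iso_iff: "?iso \<longleftrightarrow> E = ?K"
    using graph_iso_join_iff_eq_complete_split_graph[OF \<open>finite V\<close> \<open>S \<subseteq> V\<close> assms(1) E_sub_K]
    unfolding S(2) card_diff .
  show ?thesis
  proof (cases "E = ?K")
    case True
    then show ?thesis using ABC_K iso_iff by simp
  next
    case False
    then obtain e where "e \<in> ?K" using E_sub_K by blast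
    with K_simple obtain u v where uv: "u \<noteq> v" "u \<in> V" "v \<in> V" by (blast elim: simple_graph_edgeE)
    have "\<forall>x\<in>V. 0 < degree E x"
      using connected_graph_degree_pos[OF assms(1,2)] uv by metis
    then have "ABC E < ?R"
      using ABC_less_of_psubset[OF K_simple] E_sub_K False ABC_K by auto
    then show ?thesis using iso_iff False by simp
  qed
qed

end
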